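(* Let $n\ge3$, $m\in\{2,3,\dots,n-1\}$ and $t\in(0,1]$. Then there exist a Hilbert space $\mathcal H$ and operators $T_1,\dots,T_n\in B(\mathcal H)$ with $\sum_{i=1}^nT_iT_i^*\le I$ and $\operatorname{rank}(I-\sum_iT_iT_i^* )<\infty$ such that, with $\varphi(X):=\sum_iT_iXT_i^*$ and $\varphi^*(X):=\sum_iT_i^*XT_i$, one has $\|\varphi^*(I)\|=m$ and $\operatorname{curv}_*(\varphi,I)=t$.
   Context: A tuple $T_1,\dots,T_n$ defines a Hilbert module over the free semigroup algebra; "finite rank contractive" means $\sum_iT_iT_i^*\le I$ and $\dim\overline{(I-\sum_iT_iT_i^* )\mathcal H}<\infty$. For positive $D$ with $\varphi(D)\le D$, $\operatorname{curv}_*(\varphi,D):=\lim_{k\to\infty}\frac{\operatorname{trace}[K_{\varphi,D}^*(P_{\le k}\otimes I)K_{\varphi,D}]}{1+\|\varphi^*(I)\|+\cdots+\|\varphi^*(I)\|^k}$, where $K_{\varphi,D}h:=\sum_{\alpha\in\mathbb F_n^+}e_\alpha\otimes(D-\varphi(D))^{1/2}T_\alpha^*h$ maps $\mathcal H$ into $F^2(H_n)\otimes\mathcal H$ ($F^2(H_n)$ the full Fock space with orthonormal basis $\{e_\alpha\}$ indexed by words in the free semigroup $\mathbb F_n^+$), and $P_{\le k}$ is the projection onto $\operatorname{span}\{e_\alpha:|\alpha|\le k\}$. *)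

theory Defs
  imports "HOL-Analysis.Analysis"
begin

text \<open>Concrete model of a (separable, complex) Hilbert space: \<open>\<ell>\<^sup>2(A)\<close> for an index
set \<open>A \<subseteq> \<nat>\<close>, realised as complex sequences supported in A that are square summable.\<close>

type_synonym vec = "nat \<Rightarrow> complex"
type_synonym op = "vec \<Rightarrow> vec"

definition l2 :: "nat set \<Rightarrow> vec set" where
  "l2 A = {x. (\<forall>j. j \<notin> A \<longrightarrow> x j = 0) \<and> summable (\<lambda>j. (cmod (x j))\<^sup>2)}"

definition inner_l2 :: "vec \<Rightarrow> vec \<Rightarrow> complex" where
  "inner_l2 x y = (\<Sum>j. x j * cnj (y j))"

definition norm_l2 :: "vec \<Rightarrow> real" where
  "norm_l2 x = sqrt (\<Sum>j. (cmod (x j))\<^sup>2)"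

definition evec :: "nat \<Rightarrow> vec" where
  "evec j = (\<lambda>i. if i = j then 1 else 0)"

definition bounded_op :: "nat set \<Rightarrow> op \<Rightarrow> bool" where
  "bounded_op A T \<longleftrightarrow>
     (\<forall>x\<in>l2 A. T x \<in> l2 A) \<and>
     (\<forall>x\<in>l2 A. \<forall>y\<in>l2 A. \<forall>c::complex. T (\<lambda>j. x j + c * y j) = (\<lambda>j. T x j + c * T y j)) \<and>
     (\<exists>C. \<forall>x\<in>l2 A. norm_l2 (T x) \<le> C * norm_l2 x)"

definition is_adjoint :: "nat set \<Rightarrow> op \<Rightarrow> op \<Rightarrow> bool" where
  "is_adjoint A T S \<longleftrightarrow> (\<forall>x\<in>l2 A. \<forall>y\<in>l2 A. inner_l2 (T x) y = inner_l2 x (S y))"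

definition opnorm :: "nat set \<Rightarrow> op \<Rightarrow> real" where
  "opnorm A S = Sup {norm_l2 (S x) | x. x \<in> l2 A \<and> norm_l2 x \<le> 1}"

definition finite_rank :: "nat set \<Rightarrow> op \<Rightarrow> bool" where
  "finite_rank A S \<longleftrightarrow> (\<exists>F. finite F \<and> F \<subseteq> l2 A \<and>
      (\<forall>x\<in>l2 A. \<exists>c::vec \<Rightarrow> complex. S x = (\<lambda>j. \<Sum>f\<in>F. c f * f j)))"

text \<open>The maps \<open>\<phi>(X) = \<Sum> T_i X T_i^*\<close> at X = I, i.e. \<open>\<Sum> T_i T_i^*\<close>, and
 \<open>\<phi>^*(X) = \<Sum> T_i^* X T_i\<close> at X = I, i.e. \<open>\<Sum> T_i^* T_i\<close> (indices i < n).\<close>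
definition phiI :: "nat \<Rightarrow> (nat \<Rightarrow> op) \<Rightarrow> (nat \<Rightarrow> op) \<Rightarrow> op" where
  "phiI n T Ts x = (\<lambda>j. \<Sum>i<n. T i (Ts i x) j)"

definition phistarI :: "nat \<Rightarrow> (nat \<Rightarrow> op) \<Rightarrow> (nat \<Rightarrow> op) \<Rightarrow> op" where
  "phistarI n T Ts x = (\<lambda>j. \<Sum>i<n. Ts i (T i x) j)"

definition defect :: "nat \<Rightarrow> (nat \<Rightarrow> op) \<Rightarrow> (nat \<Rightarrow> op) \<Rightarrow> op" where
  "defect n T Ts x = (\<lambda>j. x j - phiI n T Ts x j)"

fun word_star :: "(nat \<Rightarrow> op) \<Rightarrow> nat list \<Rightarrow> op" where
  "word_star Ts [] = id"
| "word_star Ts (i # \<alpha>) = word_star Ts \<alpha> \<circ> Ts i"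

definition words_le :: "nat \<Rightarrow> nat \<Rightarrow> nat list set" where
  "words_le n k = {\<alpha>. set \<alpha> \<subseteq> {..<n} \<and> length \<alpha> \<le> k}"

text \<open>Summand of \<open>trace[K^*(P_{\<le>k}\<otimes>I)K]\<close> (case D = I) at basis vector \<open>e_j\<close>:
  \<open>\<Sum>_{|\<alpha>|\<le>k} \<parallel>\<Delta>^{1/2} T_\<alpha>^* e_j\<parallel>\<^sup>2 = \<Sum>_{|\<alpha>|\<le>k} \<langle>\<Delta> T_\<alpha>^* e_j, T_\<alpha>^* e_j\<rangle>\<close>.\<close>
definition curv_term :: "nat \<Rightarrow> (nat \<Rightarrow> op) \<Rightarrow> (nat \<Rightarrow> op) \<Rightarrow> nat \<Rightarrow> nat \<Rightarrow> real" where
  "curv_term n T Ts k j =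
     (\<Sum>\<alpha>\<in>words_le n k. Re (inner_l2 (defect n T Ts (word_star Ts \<alpha> (evec j))) (word_star Ts \<alpha> (evec j))))"

end

theory Submission
  imports Defs
begin

text \<open>Take \<open>\<ell>\<^sup>2(\<nat>)\<close>; the even indices \<open>2a\<close> carry the vertices \<open>a\<close> of the
  rooted \<open>m\<close>-ary tree (the children of \<open>a\<close> are \<open>m a + i + 1\<close>, \<open>i < m\<close>) and the odd
  indices form a chain \<open>\<dots> \<rightarrow> 5 \<rightarrow> 3 \<rightarrow> 1 \<rightarrow> 0\<close> ending in the root. The generators
  \<open>T\<^sub>i\<close>, \<open>i < m\<close>, are the isometric tree shifts, \<open>T\<^sub>m\<close> moves down the chain with
  weight \<open>c = sqrt (1 - t)\<close> on the last edge \<open>1 \<rightarrow> 0\<close>, and the other generators vanish.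
  Every basis vector except \<open>e\<^sub>0\<close> has exactly one incoming edge of weight 1, so
  \<open>I - \<phi>(I) = t P\<^sub>0\<close> has rank one, while \<open>\<phi>\<^sup>*(I)\<close> is diagonal with entry \<open>m\<close> at every
  tree vertex and hence has norm \<open>m\<close>. Finally
  \<open>\<langle>(I - \<phi>(I)) T\<^sub>\<alpha>\<^sup>* e\<^sub>j, T\<^sub>\<alpha>\<^sup>* e\<^sub>j\<rangle> = t \<bar>\<langle>T\<^sub>\<alpha>\<^sup>* e\<^sub>j, e\<^sub>0\<rangle>\<bar>\<^sup>2\<close> equals \<open>t\<close> exactly
  when \<open>\<alpha>\<close> is a word in the tree letters leading from the root to \<open>j\<close>, so the \<open>k\<close>-th
  numerator of the curvature is \<open>t (1 + m + \<dots> + m\<^sup>k)\<close> and every quotient equals \<open>t\<close>.\<close>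

lemma has_sum_sum:
  fixes f :: "'i \<Rightarrow> 'a \<Rightarrow> 'b::topological_comm_monoid_add"
  assumes "finite I" and "\<And>i. i \<in> I \<Longrightarrow> (f i has_sum s i) A"
  shows "((\<lambda>x. \<Sum>i\<in>I. f i x) has_sum (\<Sum>i\<in>I. s i)) A"
  using assms by (induction I rule: finite_induct) (simp_all add: has_sum_add)

section \<open>Diagonal operators\<close>

lemma l2_UNIV: "l2 UNIV = {x. summable (\<lambda>j. (cmod (x j))\<^sup>2)}"
  by (simp add: l2_def)

definition diag_op :: "(nat \<Rightarrow> real) \<Rightarrow> op" where
  "diag_op D x = (\<lambda>k. complex_of_real (D k) * x k)"

lemma inner_diag_op_le:
  assumes D0: "\<And>k. 0 \<le> D k" and D1: "\<And>k. D k \<le> 1" and x: "x \<in> l2 UNIV"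
  shows "Re (inner_l2 (diag_op D x) x) \<le> Re (inner_l2 x x)"
proof -
  have sx: "summable (\<lambda>k. (cmod (x k))\<^sup>2)"
    using x by (simp add: l2_UNIV)
  have le: "D k * (cmod (x k))\<^sup>2 \<le> (cmod (x k))\<^sup>2" for k
    using D0 D1 by (simp add: mult_left_le_one_le)
  have sD: "summable (\<lambda>k. D k * (cmod (x k))\<^sup>2)"
    by (rule summable_comparison_test'[OF sx]) (use D0 le in auto)
  have "inner_l2 (diag_op D x) x = (\<Sum>k. complex_of_real (D k * (cmod (x k))\<^sup>2))"
    unfolding inner_l2_def diag_op_def by (simp only: of_real_mult complex_norm_square mult.assoc)
  also have "\<dots> = complex_of_real (\<Sum>k. D k * (cmod (x k))\<^sup>2)"
    by (rule suminf_of_real[OF sD, symmetric])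
  finally have Dx: "inner_l2 (diag_op D x) x = complex_of_real (\<Sum>k. D k * (cmod (x k))\<^sup>2)" .
  have "inner_l2 x x = (\<Sum>k. complex_of_real ((cmod (x k))\<^sup>2))"
    unfolding inner_l2_def by (simp only: complex_norm_square)
  also have "\<dots> = complex_of_real (\<Sum>k. (cmod (x k))\<^sup>2)"
    by (rule suminf_of_real[OF sx, symmetric])
  finally show ?thesis
    using Dx suminf_le[OF le sD sx] by simp
qed

lemma scaled_evec_sums: "(\<lambda>j. (cmod (complex_of_real M * evec a j))\<^sup>2) sums M\<^sup>2"
proof -
  have "(\<lambda>j. (cmod (complex_of_real M * evec a j))\<^sup>2) = (\<lambda>j. if j = a then M\<^sup>2 else 0)"
    by (simp add: evec_def fun_eq_iff)
  then show ?thesis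
    using sums_single[of a "\<lambda>_. M\<^sup>2"] by simp
qed

lemma evec_l2: "evec a \<in> l2 UNIV" and norm_l2_evec: "norm_l2 (evec a) = 1"
  using scaled_evec_sums[of 1 a] by (auto simp: l2_UNIV norm_l2_def sums_iff)

lemma opnorm_diag_op:
  assumes D0: "\<And>j. 0 \<le> D j" and DM: "\<And>j. D j \<le> M" and "D a = M"
  shows "opnorm UNIV (diag_op D) = M"
  unfolding opnorm_def
proof (rule cSup_eq_maximum)
  have M0: "0 \<le> M"
    using D0 assms(3) by metis
  have "diag_op D (evec a) = (\<lambda>j. complex_of_real M * evec a j)"
    using assms(3) by (simp add: diag_op_def evec_def fun_eq_iff)
  then have "norm_l2 (diag_op D (evec a)) = M"
    using scaled_evec_sums[of M a] M0 by (simp add: norm_l2_def sums_iff)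
  then show "M \<in> {norm_l2 (diag_op D x) |x. x \<in> l2 UNIV \<and> norm_l2 x \<le> 1}"
    using evec_l2[of a] norm_l2_evec[of a] by force
next
  fix y assume "y \<in> {norm_l2 (diag_op D x) |x. x \<in> l2 UNIV \<and> norm_l2 x \<le> 1}"
  then obtain x where x: "x \<in> l2 UNIV" "norm_l2 x \<le> 1" and y: "y = norm_l2 (diag_op D x)"
    by auto
  have M0: "0 \<le> M"
    using D0 assms(3) by metis
  have sx: "summable (\<lambda>k. (cmod (x k))\<^sup>2)"
    using x by (simp add: l2_UNIV)
  have le: "(cmod (diag_op D x j))\<^sup>2 \<le> M\<^sup>2 * (cmod (x j))\<^sup>2" for j
  proof -
    have "(D j)\<^sup>2 \<le> M\<^sup>2"
      using D0[of j] DM[of j] by (intro power_mono) auto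
    then show ?thesis
      using D0[of j] by (simp add: diag_op_def norm_mult power_mult_distrib mult_right_mono)
  qed
  have sM: "summable (\<lambda>j. M\<^sup>2 * (cmod (x j))\<^sup>2)"
    using sx by (rule summable_mult)
  have "(\<Sum>j. (cmod (diag_op D x j))\<^sup>2) \<le> M\<^sup>2 * (\<Sum>j. (cmod (x j))\<^sup>2)"
    using suminf_le[OF le summable_comparison_test'[OF sM] sM] le suminf_mult[OF sx] by simp
  then have "y \<le> sqrt (M\<^sup>2 * (\<Sum>j. (cmod (x j))\<^sup>2))"
    unfolding y norm_l2_def by (rule real_sqrt_le_mono)
  also have "\<dots> = M * norm_l2 x"
    using M0 by (simp add: norm_l2_def real_sqrt_mult)
  also have "\<dots> \<le> M"
    using x(2) M0 by (simp add: mult_left_le)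
  finally show "y \<le> M" .
qed

section \<open>Weighted shifts along partial bijections\<close>

definition partial_inverse :: "(nat \<Rightarrow> nat option) \<Rightarrow> (nat \<Rightarrow> nat option) \<Rightarrow> bool" where
  "partial_inverse \<rho> \<sigma> \<longleftrightarrow> (\<forall>j k. \<rho> k = Some j \<longleftrightarrow> \<sigma> j = Some k)"

lemma partial_inverse_sym: "partial_inverse \<rho> \<sigma> \<Longrightarrow> partial_inverse \<sigma> \<rho>"
  by (auto simp: partial_inverse_def)

lemma partial_inverseD:
  assumes "partial_inverse \<rho> \<sigma>"
  shows "\<rho> k = Some j \<Longrightarrow> \<sigma> j = Some k" and "\<sigma> j = Some k \<Longrightarrow> \<rho> k = Some j"
  using assms by (auto simp: partial_inverse_def)

lemma has_sum_reindex_partial_inverse: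
  fixes f :: "nat \<Rightarrow> 'a::{comm_monoid_add, topological_space}"
  assumes inv: "partial_inverse \<rho> \<sigma>" and "\<And>k. \<rho> k = None \<Longrightarrow> f k = 0"
  shows "(f has_sum s) UNIV \<longleftrightarrow> ((\<lambda>j. case \<sigma> j of None \<Rightarrow> 0 | Some k \<Rightarrow> f k) has_sum s) UNIV"
proof -
  have inv': "\<rho> k = Some j \<longleftrightarrow> \<sigma> j = Some k" for j k
    using inv by (simp add: partial_inverse_def)
  have "(f has_sum s) UNIV \<longleftrightarrow> (f has_sum s) {k. \<rho> k \<noteq> None}"
    by (rule has_sum_cong_neutral) (use assms(2) in auto)
  also have "\<dots> \<longleftrightarrow> ((\<lambda>j. f (the (\<sigma> j))) has_sum s) {j. \<sigma> j \<noteq> None}"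
  proof (rule has_sum_reindex_bij_witness[where i = "\<lambda>j. the (\<sigma> j)" and j = "\<lambda>k. the (\<rho> k)"])
    fix k assume "k \<in> {k. \<rho> k \<noteq> None}"
    then obtain j where "\<rho> k = Some j" and "\<sigma> j = Some k"
      using inv' by auto
    then show "the (\<sigma> (the (\<rho> k))) = k" and "the (\<rho> k) \<in> {j. \<sigma> j \<noteq> None}"
      and "f (the (\<sigma> (the (\<rho> k)))) = f k"
      by auto
  next
    fix j assume "j \<in> {j. \<sigma> j \<noteq> None}"
    then obtain k where "\<sigma> j = Some k" and "\<rho> k = Some j"
      using inv' by auto
    then show "the (\<rho> (the (\<sigma> j))) = j" and "the (\<sigma> j) \<in> {k. \<rho> k \<noteq> None}"
      by auto
  qed simp
  also have "\<dots> \<longleftrightarrow> ((\<lambda>j. case \<sigma> j of None \<Rightarrow> 0 | Some k \<Rightarrow> f k) has_sum s) UNIV"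
    by (rule has_sum_cong_neutral) (auto split: option.splits)
  finally show ?thesis .
qed

text \<open>If \<open>\<rho>\<close> and \<open>\<sigma>\<close> are partial inverses, \<open>wshift \<rho> W\<close> maps \<open>e\<^sub>j\<close> to
  \<open>W (\<sigma> j) j \<cdot> e\<^bsub>\<sigma> j\<^esub>\<close> (or to 0 if \<open>\<sigma> j\<close> is undefined).\<close>
definition wshift :: "(nat \<Rightarrow> nat option) \<Rightarrow> (nat \<Rightarrow> nat \<Rightarrow> real) \<Rightarrow> op" where
  "wshift \<rho> W x = (\<lambda>k. case \<rho> k of None \<Rightarrow> 0 | Some j \<Rightarrow> complex_of_real (W k j) * x j)"

lemma wshift_l2:
  assumes inv: "partial_inverse \<rho> \<sigma>" and W: "\<And>k j. \<bar>W k j\<bar> \<le> B"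
    and x: "summable (\<lambda>j. (cmod (x j))\<^sup>2)"
  shows "summable (\<lambda>k. (cmod (wshift \<rho> W x k))\<^sup>2)"
    and "(\<Sum>k. (cmod (wshift \<rho> W x k))\<^sup>2) \<le> B\<^sup>2 * (\<Sum>j. (cmod (x j))\<^sup>2)"
proof -
  define f where "f k = (cmod (wshift \<rho> W x k))\<^sup>2" for k
  define g where "g j = (case \<sigma> j of None \<Rightarrow> 0 | Some k \<Rightarrow> f k)" for j
  have g: "g j = (case \<sigma> j of None \<Rightarrow> 0 | Some k \<Rightarrow> (W k j)\<^sup>2 * (cmod (x j))\<^sup>2)" for j
    by (cases "\<sigma> j")
      (auto simp: g_def f_def wshift_def norm_mult power_mult_distrib dest: partial_inverseD(2)[OF inv])
  have g_nonneg: "0 \<le> g j" for j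
    by (simp add: g split: option.split)
  have g_le: "g j \<le> B\<^sup>2 * (cmod (x j))\<^sup>2" for j
  proof (cases "\<sigma> j")
    case (Some k)
    have "(W k j)\<^sup>2 \<le> B\<^sup>2"
      using W[of k j] abs_le_square_iff[of "W k j" B] by simp
    then show ?thesis
      using Some by (simp add: g mult_right_mono)
  qed (simp add: g)
  have Bx: "summable (\<lambda>j. B\<^sup>2 * (cmod (x j))\<^sup>2)"
    using x by (rule summable_mult)
  have sg: "summable g"
    by (rule summable_comparison_test'[OF Bx]) (use g_nonneg g_le in auto)
  have "(g has_sum suminf g) UNIV"
    using sg g_nonneg by (intro sums_nonneg_imp_has_sum) (auto simp: summable_sums)
  then have "(f has_sum suminf g) UNIV"
    unfolding g_def by (subst has_sum_reindex_partial_inverse[OF inv]) (auto simp: f_def wshift_def)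
  then have f_sums: "f sums suminf g"
    by (rule has_sum_imp_sums)
  then show "summable (\<lambda>k. (cmod (wshift \<rho> W x k))\<^sup>2)"
    unfolding f_def by (rule sums_summable)
  have "suminf g \<le> B\<^sup>2 * (\<Sum>j. (cmod (x j))\<^sup>2)"
    using suminf_le[OF g_le sg Bx] suminf_mult[OF x] by simp
  then show "(\<Sum>k. (cmod (wshift \<rho> W x k))\<^sup>2) \<le> B\<^sup>2 * (\<Sum>j. (cmod (x j))\<^sup>2)"
    using f_sums unfolding f_def by (simp add: sums_iff)
qed

lemma bounded_op_wshift:
  assumes "partial_inverse \<rho> \<sigma>" and W: "\<And>k j. \<bar>W k j\<bar> \<le> B"
  shows "bounded_op UNIV (wshift \<rho> W)"
  unfolding bounded_op_def
proof (intro conjI ballI allI exI)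
  fix x assume "x \<in> l2 UNIV"
  then show "wshift \<rho> W x \<in> l2 UNIV"
    using wshift_l2(1)[OF assms] by (simp add: l2_UNIV)
next
  fix x y c
  show "wshift \<rho> W (\<lambda>j. x j + c * y j) = (\<lambda>j. wshift \<rho> W x j + c * wshift \<rho> W y j)"
    by (auto simp: wshift_def algebra_simps split: option.split)
next
  fix x assume "x \<in> l2 UNIV"
  then have "norm_l2 (wshift \<rho> W x) \<le> sqrt (B\<^sup>2 * (\<Sum>j. (cmod (x j))\<^sup>2))"
    unfolding norm_l2_def using wshift_l2(2)[OF assms] by (simp add: l2_UNIV)
  moreover have "0 \<le> B"
    using W[of 0 0] by simp
  ultimately show "norm_l2 (wshift \<rho> W x) \<le> B * norm_l2 x"
    by (simp add: norm_l2_def real_sqrt_mult)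
qed

lemma is_adjoint_wshift:
  assumes inv: "partial_inverse \<rho> \<sigma>" and W: "\<And>k j. \<bar>W k j\<bar> \<le> B"
  shows "is_adjoint UNIV (wshift \<rho> W) (wshift \<sigma> (\<lambda>j k. W k j))"
  unfolding is_adjoint_def
proof (intro ballI)
  fix x y assume "x \<in> l2 UNIV" "y \<in> l2 UNIV"
  then have x: "summable (\<lambda>j. (cmod (x j))\<^sup>2)" and y: "summable (\<lambda>j. (cmod (y j))\<^sup>2)"
    by (auto simp: l2_UNIV)
  define F where "F = (\<lambda>k. wshift \<rho> W x k * cnj (y k))"
  have Wx: "summable (\<lambda>k. (cmod (wshift \<rho> W x k))\<^sup>2)"
    by (rule wshift_l2(1)[OF inv W x])
  have "summable (\<lambda>k. norm (F k))"
  proof (rule summable_comparison_test'[OF summable_add[OF Wx y]])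
    fix k
    have "norm (norm (F k)) = cmod (wshift \<rho> W x k) * cmod (y k)"
      by (simp add: F_def norm_mult)
    also have "\<dots> \<le> 2 * cmod (wshift \<rho> W x k) * cmod (y k)"
      by simp
    also have "\<dots> \<le> (cmod (wshift \<rho> W x k))\<^sup>2 + (cmod (y k))\<^sup>2"
      by (rule sum_squares_bound)
    finally show "norm (norm (F k)) \<le> (cmod (wshift \<rho> W x k))\<^sup>2 + (cmod (y k))\<^sup>2" .
  qed
  then have "(F has_sum suminf F) UNIV"
    using norm_summable_imp_has_sum summable_sums summable_norm_cancel by blast
  then have "((\<lambda>j. case \<sigma> j of None \<Rightarrow> 0 | Some k \<Rightarrow> F k) has_sum suminf F) UNIV"
    by (subst has_sum_reindex_partial_inverse[OF inv, symmetric]) (auto simp: F_def wshift_def)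
  moreover have "(\<lambda>j. case \<sigma> j of None \<Rightarrow> 0 | Some k \<Rightarrow> F k) =
      (\<lambda>j. x j * cnj (wshift \<sigma> (\<lambda>j k. W k j) y j))"
  proof
    fix j show "(case \<sigma> j of None \<Rightarrow> 0 | Some k \<Rightarrow> F k) = x j * cnj (wshift \<sigma> (\<lambda>j k. W k j) y j)"
      by (cases "\<sigma> j") (auto simp: F_def wshift_def dest: partial_inverseD(2)[OF inv])
  qed
  ultimately have "(\<lambda>j. x j * cnj (wshift \<sigma> (\<lambda>j k. W k j) y j)) sums suminf F"
    by (simp add: has_sum_imp_sums)
  moreover have "inner_l2 (wshift \<rho> W x) y = suminf F"
    by (simp add: inner_l2_def F_def)
  ultimately show "inner_l2 (wshift \<rho> W x) y = inner_l2 x (wshift \<sigma> (\<lambda>j k. W k j) y)"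
    by (simp add: inner_l2_def sums_iff)
qed

lemma wshift_wshift_transpose:
  assumes "partial_inverse \<rho> \<sigma>"
  shows "wshift \<rho> W (wshift \<sigma> (\<lambda>j k. W k j) x) =
    diag_op (\<lambda>k. case \<rho> k of None \<Rightarrow> 0 | Some j \<Rightarrow> (W k j)\<^sup>2) x"
proof
  fix k show "wshift \<rho> W (wshift \<sigma> (\<lambda>j k. W k j) x) k =
    diag_op (\<lambda>k. case \<rho> k of None \<Rightarrow> 0 | Some j \<Rightarrow> (W k j)\<^sup>2) x k"
    by (cases "\<rho> k")
      (auto simp: wshift_def diag_op_def power2_eq_square dest: partial_inverseD(1)[OF assms])
qed

lemma wshift_transpose_evec:
  assumes "partial_inverse \<rho> \<sigma>"
  shows "wshift \<sigma> (\<lambda>j k. W k j) (evec k) =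
    (case \<rho> k of None \<Rightarrow> (\<lambda>_. 0) | Some j \<Rightarrow> (\<lambda>i. complex_of_real (W k j) * evec j i))"
proof
  fix i show "wshift \<sigma> (\<lambda>j k. W k j) (evec k) i =
    (case \<rho> k of None \<Rightarrow> (\<lambda>_. 0) | Some j \<Rightarrow> (\<lambda>i. complex_of_real (W k j) * evec j i)) i"
  proof (cases "\<rho> k = Some i")
    case True
    then show ?thesis
      by (simp add: wshift_def evec_def partial_inverseD(1)[OF assms])
  next
    case False
    then have "\<sigma> i \<noteq> Some k"
      using partial_inverseD(2)[OF assms] by blast
    with False show ?thesis
      by (auto simp: wshift_def evec_def split: option.split)
  qed
qed

lemma wshift_cmult: "wshift \<rho> W (\<lambda>i. c * v i) = (\<lambda>i. c * wshift \<rho> W v i)"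
  by (auto simp: wshift_def algebra_simps split: option.split)

lemma word_star_cmult:
  assumes "\<And>i v. Ts i (\<lambda>x. c * v x) = (\<lambda>x. c * Ts i v x)"
  shows "word_star Ts \<alpha> (\<lambda>x. c * v x) = (\<lambda>x. c * word_star Ts \<alpha> v x)"
  using assms by (induction \<alpha> arbitrary: v) simp_all

section \<open>The tree-and-chain model\<close>

definition tree_succ :: "nat \<Rightarrow> nat \<Rightarrow> nat \<Rightarrow> nat option" where
  "tree_succ m i j = (if even j then Some (2 * (m * (j div 2) + i + 1)) else None)"

definition tree_pred :: "nat \<Rightarrow> nat \<Rightarrow> nat \<Rightarrow> nat option" where
  "tree_pred m i k =
    (if even k \<and> 0 < k \<and> (k div 2 - 1) mod m = i then Some (2 * ((k div 2 - 1) div m)) else None)"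

definition chain_succ :: "nat \<Rightarrow> nat option" where
  "chain_succ j = (if j = 1 then Some 0 else if odd j \<and> 3 \<le> j then Some (j - 2) else None)"

definition chain_pred :: "nat \<Rightarrow> nat option" where
  "chain_pred k = (if k = 0 then Some 1 else if odd k then Some (k + 2) else None)"

definition shift_succ :: "nat \<Rightarrow> nat \<Rightarrow> nat \<Rightarrow> nat option" where
  "shift_succ m i = (if i < m then tree_succ m i else if i = m then chain_succ else (\<lambda>_. None))"

definition shift_pred :: "nat \<Rightarrow> nat \<Rightarrow> nat \<Rightarrow> nat option" where
  "shift_pred m i = (if i < m then tree_pred m i else if i = m then chain_pred else (\<lambda>_. None))"

definition shift_weight :: "real \<Rightarrow> nat \<Rightarrow> nat \<Rightarrow> nat \<Rightarrow> real" where
  "shift_weight c m i j = (if i = m \<and> j = 1 then c else 1)"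

definition model_T :: "real \<Rightarrow> nat \<Rightarrow> nat \<Rightarrow> op" where
  "model_T c m i = wshift (shift_pred m i) (\<lambda>k j. shift_weight c m i j)"

definition model_Ts :: "real \<Rightarrow> nat \<Rightarrow> nat \<Rightarrow> op" where
  "model_Ts c m i = wshift (shift_succ m i) (\<lambda>j k. shift_weight c m i j)"

lemma partial_inverse_tree:
  assumes "i < m"
  shows "partial_inverse (tree_pred m i) (tree_succ m i)"
  unfolding partial_inverse_def
proof (intro allI iffI)
  fix j k
  assume "tree_pred m i k = Some j"
  then have k: "even k" "0 < k" "(k div 2 - 1) mod m = i" and j: "j = 2 * ((k div 2 - 1) div m)"
    by (auto simp: tree_pred_def split: if_splits)
  have "m * (j div 2) + i = k div 2 - 1"
    using j k(3) mult_div_mod_eq[of m "k div 2 - 1"] by simp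
  moreover have "2 * (k div 2 - 1 + 1) = k"
    using k(1,2) by presburger
  ultimately show "tree_succ m i j = Some k"
    using j by (simp add: tree_succ_def)
next
  fix j k
  assume "tree_succ m i j = Some k"
  then have "even j" and k: "k = 2 * (m * (j div 2) + i + 1)"
    by (auto simp: tree_succ_def split: if_splits)
  then show "tree_pred m i k = Some j"
    using assms by (simp add: tree_pred_def)
qed

lemma partial_inverse_chain: "partial_inverse chain_pred chain_succ"
  by (auto simp: partial_inverse_def chain_pred_def chain_succ_def)

lemma partial_inverse_shift: "partial_inverse (shift_pred m i) (shift_succ m i)"
  using partial_inverse_tree[of i m] partial_inverse_chain
  by (auto simp: shift_pred_def shift_succ_def partial_inverse_def)

lemma shift_pred_tree_iff:
  assumes "i < m"
  shows "shift_pred m i k = Some j \<longleftrightarrow> even j \<and> k = 2 * (m * (j div 2) + i + 1)"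
  using partial_inverse_tree[OF assms] assms
  by (auto simp: shift_pred_def tree_succ_def partial_inverse_def)

lemma shift_pred_chain_odd:
  assumes "m \<le> i" and "shift_pred m i k = Some j"
  shows "odd j"
  using assms by (auto simp: shift_pred_def chain_pred_def split: if_splits)

lemma abs_shift_weight_le: "\<bar>c\<bar> \<le> 1 \<Longrightarrow> \<bar>shift_weight c m i j\<bar> \<le> 1"
  by (simp add: shift_weight_def)

lemma bounded_op_model_T: "\<bar>c\<bar> \<le> 1 \<Longrightarrow> bounded_op UNIV (model_T c m i)"
  unfolding model_T_def by (rule bounded_op_wshift[OF partial_inverse_shift abs_shift_weight_le])

lemma bounded_op_model_Ts: "\<bar>c\<bar> \<le> 1 \<Longrightarrow> bounded_op UNIV (model_Ts c m i)"
  unfolding model_Ts_def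
  by (rule bounded_op_wshift[OF partial_inverse_sym[OF partial_inverse_shift] abs_shift_weight_le])

lemma is_adjoint_model: "\<bar>c\<bar> \<le> 1 \<Longrightarrow> is_adjoint UNIV (model_T c m i) (model_Ts c m i)"
  unfolding model_T_def model_Ts_def
  by (rule is_adjoint_wshift[OF partial_inverse_shift abs_shift_weight_le])

lemma sum_shift_pred_weights:
  assumes "0 < m" and "m < n"
  shows "(\<Sum>i<n. case shift_pred m i k of None \<Rightarrow> 0 | Some j \<Rightarrow> (shift_weight c m i j)\<^sup>2) =
    (if k = 0 then c\<^sup>2 else 1)"
proof -
  define owner where "owner = (if k = 0 \<or> odd k then m else (k div 2 - 1) mod m)"
  have "owner < n"
    using assms by (auto simp: owner_def intro: less_trans[OF mod_less_divisor])
  have "(case shift_pred m i k of None \<Rightarrow> 0 | Some j \<Rightarrow> (shift_weight c m i j)\<^sup>2) =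
      (if i = owner then (if k = 0 then c\<^sup>2 else 1) else 0)" for i
    using assms
    by (auto simp: owner_def shift_pred_def tree_pred_def chain_pred_def shift_weight_def)
  then show ?thesis
    using \<open>owner < n\<close> by simp
qed

lemma sum_shift_succ_weights:
  assumes "m < n"
  shows "(\<Sum>i<n. case shift_succ m i j of None \<Rightarrow> 0 | Some k \<Rightarrow> (shift_weight c m i j)\<^sup>2) =
    (if even j then real m else if j = 1 then c\<^sup>2 else 1)"
proof (cases "even j")
  case True
  then have "(case shift_succ m i j of None \<Rightarrow> 0 | Some k \<Rightarrow> (shift_weight c m i j)\<^sup>2) =
      (if i < m then 1 else 0)" for i
    by (auto simp: shift_succ_def tree_succ_def chain_succ_def shift_weight_def)
  moreover have "{i \<in> {..<n}. i < m} = {..<m}"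
    using assms by auto
  ultimately show ?thesis
    using True by (simp add: sum.inter_filter[symmetric])
next
  case False
  then have "(case shift_succ m i j of None \<Rightarrow> 0 | Some k \<Rightarrow> (shift_weight c m i j)\<^sup>2) =
      (if i = m then (if j = 1 then c\<^sup>2 else 1) else 0)" for i
    by (auto simp: shift_succ_def tree_succ_def chain_succ_def shift_weight_def; presburger)
  then show ?thesis
    using False assms by simp
qed

lemma phiI_model:
  assumes "0 < m" and "m < n"
  shows "phiI n (model_T c m) (model_Ts c m) = diag_op (\<lambda>k. if k = 0 then c\<^sup>2 else 1)"
proof (intro ext)
  fix x k
  have "phiI n (model_T c m) (model_Ts c m) x k = complex_of_real
      (\<Sum>i<n. case shift_pred m i k of None \<Rightarrow> 0 | Some j \<Rightarrow> (shift_weight c m i j)\<^sup>2) * x k"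
    by (simp add: phiI_def model_T_def model_Ts_def wshift_wshift_transpose[OF partial_inverse_shift]
        diag_op_def sum_distrib_right)
  then show "phiI n (model_T c m) (model_Ts c m) x k = diag_op (\<lambda>k. if k = 0 then c\<^sup>2 else 1) x k"
    by (simp add: sum_shift_pred_weights[OF assms] diag_op_def)
qed

lemma phistarI_model:
  assumes "m < n"
  shows "phistarI n (model_T c m) (model_Ts c m) =
    diag_op (\<lambda>j. if even j then real m else if j = 1 then c\<^sup>2 else 1)"
proof (intro ext)
  fix x j
  have "phistarI n (model_T c m) (model_Ts c m) x j = complex_of_real
      (\<Sum>i<n. case shift_succ m i j of None \<Rightarrow> 0 | Some k \<Rightarrow> (shift_weight c m i j)\<^sup>2) * x j"
    by (simp add: phistarI_def model_T_def model_Ts_def diag_op_def sum_distrib_right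
        wshift_wshift_transpose[OF partial_inverse_sym[OF partial_inverse_shift]])
  then show "phistarI n (model_T c m) (model_Ts c m) x j =
      diag_op (\<lambda>j. if even j then real m else if j = 1 then c\<^sup>2 else 1) x j"
    by (simp add: sum_shift_succ_weights[OF assms] diag_op_def)
qed

lemma defect_model:
  assumes "0 < m" and "m < n" and "c\<^sup>2 = 1 - t"
  shows "defect n (model_T c m) (model_Ts c m) x = (\<lambda>k. if k = 0 then complex_of_real t * x 0 else 0)"
  by (simp add: defect_def phiI_model[OF assms(1,2)] diag_op_def fun_eq_iff assms(3) algebra_simps)

lemma Re_inner_defect_model:
  assumes "0 < m" and "m < n" and "c\<^sup>2 = 1 - t"
  shows "Re (inner_l2 (defect n (model_T c m) (model_Ts c m) v) v) = t * (cmod (v 0))\<^sup>2"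
proof -
  have "(\<lambda>k. defect n (model_T c m) (model_Ts c m) v k * cnj (v k)) =
      (\<lambda>k. if k = 0 then complex_of_real t * (v 0 * cnj (v 0)) else 0)"
    by (auto simp: defect_model[OF assms])
  then have "inner_l2 (defect n (model_T c m) (model_Ts c m) v) v = complex_of_real t * (v 0 * cnj (v 0))"
    using sums_single[of 0 "\<lambda>_. complex_of_real t * (v 0 * cnj (v 0))"]
    by (simp add: inner_l2_def sums_iff)
  then show ?thesis
    by (simp flip: complex_norm_square)
qed

lemma finite_rank_defect_model:
  assumes "0 < m" and "m < n" and "c\<^sup>2 = 1 - t"
  shows "finite_rank UNIV (defect n (model_T c m) (model_Ts c m))"
  unfolding finite_rank_def
proof (intro exI[of _ "{evec 0}"] conjI ballI)
  fix x
  show "\<exists>a. defect n (model_T c m) (model_Ts c m) x = (\<lambda>j. \<Sum>f\<in>{evec 0}. a f * f j)"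
    by (intro exI[of _ "\<lambda>_. complex_of_real t * x 0"]) (auto simp: defect_model[OF assms] evec_def)
qed (use evec_l2 in auto)

text \<open>The first letter of the word is the last edge of the path from the root.\<close>
fun tree_vertex :: "nat \<Rightarrow> nat list \<Rightarrow> nat" where
  "tree_vertex m [] = 0"
| "tree_vertex m (i # \<alpha>) = m * tree_vertex m \<alpha> + i + 1"

lemma model_Ts_evec:
  "model_Ts c m i (evec k) = (case shift_pred m i k of None \<Rightarrow> (\<lambda>_. 0)
     | Some j \<Rightarrow> (\<lambda>l. complex_of_real (shift_weight c m i j) * evec j l))"
  unfolding model_Ts_def by (rule wshift_transpose_evec[OF partial_inverse_shift])

lemma word_star_model_Ts_evec:
  assumes "0 < m"
  shows "word_star (model_Ts c m) \<alpha> (evec j) 0 =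
    (if set \<alpha> \<subseteq> {..<m} \<and> j = 2 * tree_vertex m \<alpha> then 1 else 0)"
proof (induction \<alpha> arbitrary: j)
  case Nil
  then show ?case
    by (simp add: evec_def)
next
  case (Cons i \<alpha>)
  have cmult: "word_star (model_Ts c m) \<alpha> (\<lambda>l. a * v l) = (\<lambda>l. a * word_star (model_Ts c m) \<alpha> v l)"
    for a v
    by (rule word_star_cmult) (simp add: model_Ts_def wshift_cmult)
  show ?case
  proof (cases "shift_pred m i j")
    case None
    then have "\<not> (set (i # \<alpha>) \<subseteq> {..<m} \<and> j = 2 * tree_vertex m (i # \<alpha>))"
      using shift_pred_tree_iff[of i m j "2 * tree_vertex m \<alpha>"] by auto
    then show ?thesis
      using None cmult[of 0] by (simp add: model_Ts_evec del: tree_vertex.simps)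
  next
    case (Some j')
    have "word_star (model_Ts c m) (i # \<alpha>) (evec j) 0 =
        shift_weight c m i j' * word_star (model_Ts c m) \<alpha> (evec j') 0"
      using Some by (simp add: model_Ts_evec cmult)
    also have "\<dots> = shift_weight c m i j' *
        (if set \<alpha> \<subseteq> {..<m} \<and> j' = 2 * tree_vertex m \<alpha> then 1 else 0)"
      using Cons.IH by simp
    also have "\<dots> = (if set (i # \<alpha>) \<subseteq> {..<m} \<and> j = 2 * tree_vertex m (i # \<alpha>) then 1 else 0)"
    proof (cases "i < m")
      case True
      then have j': "even j'" "j = 2 * (m * (j' div 2) + i + 1)"
        using Some shift_pred_tree_iff by auto
      then have "j' = 2 * tree_vertex m \<alpha> \<longleftrightarrow> j = 2 * tree_vertex m (i # \<alpha>)"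
        using assms by auto
      then show ?thesis
        using True by (simp add: shift_weight_def)
    next
      case False
      then have "odd j'"
        by (intro shift_pred_chain_odd[OF _ Some]) simp
      then show ?thesis
        using False by auto
    qed
    finally show ?thesis .
  qed
qed

lemma curv_term_model:
  assumes "0 < m" and "m < n" and "c\<^sup>2 = 1 - t"
  shows "curv_term n (model_T c m) (model_Ts c m) k =
    (\<lambda>j. \<Sum>\<alpha>\<in>words_le n k. if set \<alpha> \<subseteq> {..<m} \<and> j = 2 * tree_vertex m \<alpha> then t else 0)"
  unfolding curv_term_def Re_inner_defect_model[OF assms] word_star_model_Ts_evec[OF assms(1)]
  by (intro ext sum.cong) auto

lemma curv_term_model_has_sum:
  assumes "0 < m" and "m < n" and "c\<^sup>2 = 1 - t"
  shows "(curv_term n (model_T c m) (model_Ts c m) k has_sum t * (\<Sum>i\<le>k. real m ^ i)) UNIV"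
proof -
  have fin: "finite (words_le n k)"
    unfolding words_le_def by (rule finite_lists_length_le) simp
  have point: "((\<lambda>j. if P \<and> j = a then t else 0) has_sum (if P then t else 0)) UNIV"
    for P and a :: nat
    by (rule has_sum_finite_neutralI[of "{a}"]) auto
  have "(curv_term n (model_T c m) (model_Ts c m) k has_sum
      (\<Sum>\<alpha>\<in>words_le n k. if set \<alpha> \<subseteq> {..<m} then t else 0)) UNIV"
    unfolding curv_term_model[OF assms] by (rule has_sum_sum[OF fin point])
  moreover have "{\<alpha> \<in> words_le n k. set \<alpha> \<subseteq> {..<m}} = {xs. set xs \<subseteq> {..<m} \<and> length xs \<le> k}"
    using assms(2) by (auto simp: words_le_def)
  then have "(\<Sum>\<alpha>\<in>words_le n k. if set \<alpha> \<subseteq> {..<m} then t else 0) = t * (\<Sum>i\<le>k. real m ^ i)"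
    using card_lists_length_le[of "{..<m}" k] by (simp add: sum.inter_filter[OF fin, symmetric])
  ultimately show ?thesis
    by simp
qed

lemma opnorm_phistarI_model:
  assumes "0 < m" and "m < n" and "\<bar>c\<bar> \<le> 1"
  shows "opnorm UNIV (phistarI n (model_T c m) (model_Ts c m)) = real m"
proof -
  have "c\<^sup>2 \<le> 1"
    using assms(3) by (simp add: abs_square_le_1)
  show ?thesis
    unfolding phistarI_model[OF assms(2)]
    by (rule opnorm_diag_op[where a = 0]) (use assms(1) \<open>c\<^sup>2 \<le> 1\<close> in auto)
qed

theorem proposition6p7:
  fixes n m :: nat and t :: real
  assumes "n \<ge> 3" and "2 \<le> m" and "m \<le> n - 1" and "0 < t" and "t \<le> 1"
  shows "\<exists>(A::nat set) (T::nat \<Rightarrow> op) (Ts::nat \<Rightarrow> op).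
     (\<forall>i<n. bounded_op A (T i) \<and> bounded_op A (Ts i) \<and> is_adjoint A (T i) (Ts i)) \<and>
     (\<forall>x\<in>l2 A. Re (inner_l2 (phiI n T Ts x) x) \<le> Re (inner_l2 x x)) \<and>
     finite_rank A (defect n T Ts) \<and>
     opnorm A (phistarI n T Ts) = real m \<and>
     (\<forall>k. curv_term n T Ts k summable_on A) \<and>
     (\<lambda>k. (\<Sum>\<^sub>\<infinity>j\<in>A. curv_term n T Ts k j) /
          (\<Sum>i\<le>k. (opnorm A (phistarI n T Ts)) ^ i)) \<longlonglongrightarrow> t"
proof -
  define c where "c = sqrt (1 - t)"
  have m: "0 < m" "m < n"
    using assms(2,3) by auto
  have c: "\<bar>c\<bar> \<le> 1" "c\<^sup>2 = 1 - t"
    using assms(4,5) by (auto simp: c_def)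
  note curv = curv_term_model_has_sum[OF m c(2)]
  have "(\<Sum>\<^sub>\<infinity>j\<in>UNIV. curv_term n (model_T c m) (model_Ts c m) k j) /
      (\<Sum>i\<le>k. (opnorm UNIV (phistarI n (model_T c m) (model_Ts c m))) ^ i) = t" for k
    using infsumI[OF curv] sum_pos2[of "{..k}" 0 "\<lambda>i. real m ^ i"]
    by (simp add: opnorm_phistarI_model[OF m c(1)])
  moreover have "Re (inner_l2 (phiI n (model_T c m) (model_Ts c m) x) x) \<le> Re (inner_l2 x x)"
    if "x \<in> l2 UNIV" for x
    unfolding phiI_model[OF m]
    by (rule inner_diag_op_le[OF _ _ that]) (use c(1) in \<open>auto simp: abs_square_le_1\<close>)
  ultimately show ?thesis
    using c(1) bounded_op_model_T bounded_op_model_Ts is_adjoint_model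
      finite_rank_defect_model[OF m c(2)] opnorm_phistarI_model[OF m c(1)] has_sum_imp_summable[OF curv]
    by (intro exI[of _ UNIV] exI[of _ "model_T c m"] exI[of _ "model_Ts c m"]) auto
qed

end
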